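(* Let $p$ be an odd prime, $R=F_p+vF_p$ with $v^2=v$, and let $\vartheta=1-2v$ or $\vartheta=-1+2v$. A linear code $C$ of length $n$ over $R$ is a $\vartheta$-constacyclic code if and only if $\phi_\vartheta(C)$ is a cyclic code of length $2n$ over $F_p$.
   Context: A linear code of length $n$ over $R$ is an $R$-submodule of $R^n$; it is $\vartheta$-constacyclic if $(c_0,\dots,c_{n-1})\in C$ implies $(\vartheta c_{n-1},c_0,\dots,c_{n-2})\in C$. A cyclic code over $F_p$ is a linear code closed under the cyclic shift. Write $\vartheta=\lambda+v\mu$ with $\lambda,\mu\in F_p$. The Gray map $\phi_\vartheta:R^n\to F_p^{2n}$ is defined for $c=(c_0,\dots,c_{n-1})$ with $c_i=r_i+vq_i$ ($r_i,q_i\in F_p$) by $\phi_\vartheta(c)=(\lambda(\lambda+\mu)q_0,\dots,\lambda(\lambda+\mu)q_{n-1},\,-\mu r_0-(\lambda+\mu)q_0,\dots,-\mu r_{n-1}-(\lambda+\mu)q_{n-1})$. *)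

theory Defs
  imports "HOL-Computational_Algebra.Primes"
begin

text \<open>Elements of F_p are represented by integers in {0..<p}.
  Elements r + v q of R = F_p + v F_p (v^2 = v) are represented by pairs (r, q).
  Words of length n are lists of length n.\<close>

definition Fp_elems :: "int \<Rightarrow> int set" where
  "Fp_elems p = {x. 0 \<le> x \<and> x < p}"

definition R_elems :: "int \<Rightarrow> (int \<times> int) set" where
  "R_elems p = Fp_elems p \<times> Fp_elems p"

definition R_add :: "int \<Rightarrow> int \<times> int \<Rightarrow> int \<times> int \<Rightarrow> int \<times> int" where
  "R_add p x y = ((fst x + fst y) mod p, (snd x + snd y) mod p)"

text \<open>(a + v b)(c + v d) = ac + v(ad + bc + bd), using v^2 = v.\<close>
definition R_mult :: "int \<Rightarrow> int \<times> int \<Rightarrow> int \<times> int \<Rightarrow> int \<times> int" where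
  "R_mult p x y = ((fst x * fst y) mod p,
                   (fst x * snd y + snd x * fst y + snd x * snd y) mod p)"

definition Fp_vecs :: "int \<Rightarrow> nat \<Rightarrow> int list set" where
  "Fp_vecs p n = {xs. length xs = n \<and> set xs \<subseteq> Fp_elems p}"

definition R_vecs :: "int \<Rightarrow> nat \<Rightarrow> (int \<times> int) list set" where
  "R_vecs p n = {xs. length xs = n \<and> set xs \<subseteq> R_elems p}"

definition linear_code_Fp :: "int \<Rightarrow> nat \<Rightarrow> int list set \<Rightarrow> bool" where
  "linear_code_Fp p n C \<longleftrightarrow>
     C \<subseteq> Fp_vecs p n \<and> replicate n 0 \<in> C \<and>
     (\<forall>x\<in>C. \<forall>y\<in>C. map2 (\<lambda>a b. (a + b) mod p) x y \<in> C) \<and>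
     (\<forall>a\<in>Fp_elems p. \<forall>x\<in>C. map (\<lambda>b. (a * b) mod p) x \<in> C)"

definition linear_code_R :: "int \<Rightarrow> nat \<Rightarrow> (int \<times> int) list set \<Rightarrow> bool" where
  "linear_code_R p n C \<longleftrightarrow>
     C \<subseteq> R_vecs p n \<and> replicate n (0, 0) \<in> C \<and>
     (\<forall>x\<in>C. \<forall>y\<in>C. map2 (R_add p) x y \<in> C) \<and>
     (\<forall>a\<in>R_elems p. \<forall>x\<in>C. map (R_mult p a) x \<in> C)"

definition cyclic_code_Fp :: "int \<Rightarrow> nat \<Rightarrow> int list set \<Rightarrow> bool" where
  "cyclic_code_Fp p n C \<longleftrightarrow> linear_code_Fp p n C \<and>
     (\<forall>c\<in>C. c \<noteq> [] \<longrightarrow> last c # butlast c \<in> C)"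

definition constacyclic_R :: "int \<Rightarrow> int \<times> int \<Rightarrow> (int \<times> int) list set \<Rightarrow> bool" where
  "constacyclic_R p \<theta> C \<longleftrightarrow>
     (\<forall>c\<in>C. c \<noteq> [] \<longrightarrow> R_mult p \<theta> (last c) # butlast c \<in> C)"

definition gray :: "int \<Rightarrow> int \<times> int \<Rightarrow> (int \<times> int) list \<Rightarrow> int list" where
  "gray p \<theta> c =
     (let l = fst \<theta>; m = snd \<theta> in
      map (\<lambda>(r, q). (l * (l + m) * q) mod p) c @
      map (\<lambda>(r, q). (- m * r - (l + m) * q) mod p) c)"

end

theory Submission
  imports Defs
begin

text \<open>Write \<open>\<theta> = l(1 - 2v)\<close> with \<open>l = \<plusminus>1\<close>. The Gray map applies two \<open>F\<^sub>p\<close>-linear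
  functionals \<open>f\<^sub>1, f\<^sub>2 : R \<rightarrow> F\<^sub>p\<close> coordinatewise, the \<open>f\<^sub>1\<close>-values filling the first half of
  the image and the \<open>f\<^sub>2\<close>-values the second. Multiplication by \<open>\<theta>\<close> swaps them:
  \<open>f\<^sub>1(\<theta>x) = f\<^sub>2(x)\<close> and \<open>f\<^sub>2(\<theta>x) = f\<^sub>1(x)\<close>. Hence the image of the \<open>\<theta>\<close>-constacyclic shift
  of a word is the cyclic shift of its image. Since \<open>p\<close> is odd, \<open>(f\<^sub>1, f\<^sub>2)\<close> is injective on
  \<open>R\<close>, so the Gray map is an injective \<open>F\<^sub>p\<close>-linear map, and a shifted word lies in \<open>C\<close>
  exactly when its image lies in the image of \<open>C\<close>.\<close>

definition lin_form :: "int \<Rightarrow> int \<times> int \<Rightarrow> int \<times> int \<Rightarrow> int" where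
  "lin_form p w x = (fst w * fst x + snd w * snd x) mod p"

lemma lin_form_mod_args: "lin_form p w (a mod p, b mod p) = lin_form p w (a, b)"
  unfolding lin_form_def by (intro mod_add_cong mod_mult_cong refl) simp_all

lemma lin_form_cong:
  assumes "fst w mod p = fst w' mod p" "snd w mod p = snd w' mod p"
  shows "lin_form p w = lin_form p w'"
  unfolding lin_form_def fun_eq_iff using assms by (intro allI mod_add_cong mod_mult_cong refl)

lemma lin_form_R_add: "lin_form p w (R_add p x y) = (lin_form p w x + lin_form p w y) mod p"
proof -
  have "lin_form p w (R_add p x y) = (fst w * (fst x + fst y) + snd w * (snd x + snd y)) mod p"
    by (simp add: R_add_def lin_form_mod_args) (simp add: lin_form_def)
  then show ?thesis
    by (simp add: lin_form_def mod_add_eq algebra_simps)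
qed

lemma lin_form_R_mult:
  "lin_form p w (R_mult p \<theta> x)
    = lin_form p (fst w * fst \<theta> + snd w * snd \<theta>, snd w * (fst \<theta> + snd \<theta>)) x"
proof -
  have "lin_form p w (R_mult p \<theta> x)
      = lin_form p w (fst \<theta> * fst x, fst \<theta> * snd x + snd \<theta> * fst x + snd \<theta> * snd x)"
    by (simp add: R_mult_def lin_form_mod_args)
  then show ?thesis
    by (simp add: lin_form_def algebra_simps)
qed

lemma lin_form_R_mult_scalar: "lin_form p w (R_mult p (a, 0) x) = (a * lin_form p w x) mod p"
  unfolding lin_form_R_mult by (simp add: lin_form_def mod_mult_right_eq algebra_simps)

definition gray_left :: "int \<Rightarrow> int \<times> int \<Rightarrow> int \<times> int \<Rightarrow> int" where
  "gray_left p \<theta> = lin_form p (0, fst \<theta> * (fst \<theta> + snd \<theta>))"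

definition gray_right :: "int \<Rightarrow> int \<times> int \<Rightarrow> int \<times> int \<Rightarrow> int" where
  "gray_right p \<theta> = lin_form p (- snd \<theta>, - (fst \<theta> + snd \<theta>))"

lemma gray_eq_map_append: "gray p \<theta> c = map (gray_left p \<theta>) c @ map (gray_right p \<theta>) c"
  by (simp add: gray_def gray_left_def gray_right_def lin_form_def case_prod_beta Let_def algebra_simps)

lemma gray_map2_R_add:
  assumes "length x = length y"
  shows "gray p \<theta> (map2 (R_add p) x y)
    = map2 (\<lambda>a b. (a + b) mod p) (gray p \<theta> x) (gray p \<theta> y)"
  using assms
  by (simp add: gray_eq_map_append gray_left_def gray_right_def lin_form_R_add zip_map_map
      case_prod_beta)

lemma gray_map_R_mult_scalar:
  "gray p \<theta> (map (R_mult p (a, 0)) x) = map (\<lambda>b. (a * b) mod p) (gray p \<theta> x)"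
  by (simp add: gray_eq_map_append gray_left_def gray_right_def lin_form_R_mult_scalar)

lemma gray_replicate_zero: "gray p \<theta> (replicate n (0, 0)) = replicate (2 * n) 0"
  by (simp add: gray_eq_map_append gray_left_def gray_right_def lin_form_def mult_2 replicate_add)

lemma gray_in_Fp_vecs: "p > 0 \<Longrightarrow> gray p \<theta> c \<in> Fp_vecs p (2 * length c)"
  by (auto simp: gray_eq_map_append gray_left_def gray_right_def lin_form_def Fp_vecs_def Fp_elems_def)

lemma linear_code_Fp_gray_image:
  assumes "p > 0" "linear_code_R p n C"
  shows "linear_code_Fp p (2 * n) (gray p \<theta> ` C)"
  unfolding linear_code_Fp_def
proof (intro conjI ballI)
  have len: "length c = n" if "c \<in> C" for c
    using assms(2) that by (auto simp: linear_code_R_def R_vecs_def)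
  show "gray p \<theta> ` C \<subseteq> Fp_vecs p (2 * n)"
    using gray_in_Fp_vecs[OF assms(1)] len by fastforce
  show "replicate (2 * n) 0 \<in> gray p \<theta> ` C"
    using assms(2) gray_replicate_zero by (metis image_eqI linear_code_R_def)
  show "map2 (\<lambda>a b. (a + b) mod p) x y \<in> gray p \<theta> ` C"
    if x: "x \<in> gray p \<theta> ` C" and y: "y \<in> gray p \<theta> ` C" for x y
  proof -
    obtain c d where cd: "c \<in> C" "d \<in> C" "x = gray p \<theta> c" "y = gray p \<theta> d"
      using x y by blast
    have "map2 (R_add p) c d \<in> C"
      using assms(2) cd(1,2) by (simp add: linear_code_R_def)
    moreover have "gray p \<theta> (map2 (R_add p) c d) = map2 (\<lambda>a b. (a + b) mod p) x y"
      using cd len by (simp add: gray_map2_R_add)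
    ultimately show ?thesis
      by (metis image_eqI)
  qed
  show "map (\<lambda>b. (a * b) mod p) x \<in> gray p \<theta> ` C"
    if a: "a \<in> Fp_elems p" and x: "x \<in> gray p \<theta> ` C" for a x
  proof -
    obtain c where c: "c \<in> C" "x = gray p \<theta> c"
      using x by blast
    have "(a, 0) \<in> R_elems p"
      using a assms(1) by (simp add: R_elems_def Fp_elems_def)
    then have "map (R_mult p (a, 0)) c \<in> C"
      using assms(2) c(1) by (simp add: linear_code_R_def)
    then show ?thesis
      using c(2) gray_map_R_mult_scalar by (metis image_eqI)
  qed
qed

lemma gray_theta_mod:
  assumes "fst \<theta> mod p = fst \<theta>' mod p" "snd \<theta> mod p = snd \<theta>' mod p"
  shows "gray p \<theta> = gray p \<theta>'"
proof -
  have sum: "(fst \<theta> + snd \<theta>) mod p = (fst \<theta>' + snd \<theta>') mod p"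
    using assms by (rule mod_add_cong)
  have "gray_left p \<theta> = gray_left p \<theta>'"
    unfolding gray_left_def by (rule lin_form_cong) (simp_all add: mod_mult_cong[OF assms(1) sum])
  moreover have "gray_right p \<theta> = gray_right p \<theta>'"
    unfolding gray_right_def
    by (rule lin_form_cong)
      (simp_all only: fst_conv snd_conv mod_minus_cong[OF assms(2)] mod_minus_cong[OF sum])
  ultimately show ?thesis
    by (intro ext) (simp only: gray_eq_map_append)
qed

lemma R_mult_theta_mod:
  assumes "fst \<theta> mod p = fst \<theta>' mod p" "snd \<theta> mod p = snd \<theta>' mod p"
  shows "R_mult p \<theta> = R_mult p \<theta>'"
proof -
  have fst_cong: "(fst \<theta> * u) mod p = (fst \<theta>' * u) mod p" for u
    by (rule mod_mult_cong[OF assms(1) refl])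
  have snd_cong: "(snd \<theta> * u) mod p = (snd \<theta>' * u) mod p" for u
    by (rule mod_mult_cong[OF assms(2) refl])
  show ?thesis
    unfolding R_mult_def fun_eq_iff
    by (simp only: fst_cong mod_add_cong[OF mod_add_cong[OF fst_cong snd_cong] snd_cong] simp_thms)
qed

lemma constacyclic_R_theta_mod:
  assumes "fst \<theta> mod p = fst \<theta>' mod p" "snd \<theta> mod p = snd \<theta>' mod p"
  shows "constacyclic_R p \<theta> C \<longleftrightarrow> constacyclic_R p \<theta>' C"
  unfolding constacyclic_R_def R_mult_theta_mod[OF assms] ..

definition unit_theta :: "int \<Rightarrow> int \<times> int" where
  "unit_theta l = (l, -2 * l)"

lemma gray_left_unit: "l\<^sup>2 = 1 \<Longrightarrow> gray_left p (unit_theta l) = lin_form p (0, -1)"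
  by (simp add: gray_left_def unit_theta_def power2_eq_square algebra_simps)

lemma gray_right_unit: "gray_right p (unit_theta l) = lin_form p (2 * l, l)"
  by (simp add: gray_right_def unit_theta_def)

lemma gray_left_R_mult:
  assumes "l\<^sup>2 = 1"
  shows "gray_left p (unit_theta l) (R_mult p (unit_theta l) x) = gray_right p (unit_theta l) x"
  unfolding gray_left_unit[OF assms] gray_right_unit lin_form_R_mult by (simp add: unit_theta_def)

lemma gray_right_R_mult:
  assumes "l\<^sup>2 = 1"
  shows "gray_right p (unit_theta l) (R_mult p (unit_theta l) x) = gray_left p (unit_theta l) x"
  unfolding gray_left_unit[OF assms] gray_right_unit lin_form_R_mult
  using assms by (simp add: unit_theta_def power2_eq_square algebra_simps)

lemma gray_constashift:
  assumes "l\<^sup>2 = 1" "c \<noteq> []"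
  shows "gray p (unit_theta l) (R_mult p (unit_theta l) (last c) # butlast c)
    = last (gray p (unit_theta l) c) # butlast (gray p (unit_theta l) c)"
proof -
  have "c = butlast c @ [last c]"
    using assms(2) by simp
  then have "map (gray_left p (unit_theta l)) c
      = map (gray_left p (unit_theta l)) (butlast c) @ [gray_left p (unit_theta l) (last c)]"
    by (metis list.simps(8,9) map_append)
  then show ?thesis
    using assms by (simp add: gray_eq_map_append gray_left_R_mult[OF assms(1)]
        gray_right_R_mult[OF assms(1)] butlast_append last_map map_butlast)
qed

lemma Fp_elems_eq_if_mod_eq:
  "a \<in> Fp_elems p \<Longrightarrow> b \<in> Fp_elems p \<Longrightarrow> a mod p = b mod p \<Longrightarrow> a = b"
  by (simp add: Fp_elems_def)

lemma gray_coords_inj: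
  assumes "odd p" "l\<^sup>2 = 1" "x \<in> R_elems p" "y \<in> R_elems p"
    and left: "gray_left p (unit_theta l) x = gray_left p (unit_theta l) y"
    and right: "gray_right p (unit_theta l) x = gray_right p (unit_theta l) y"
  shows "x = y"
proof -
  have "(- snd x) mod p = (- snd y) mod p"
    using left by (simp add: gray_left_unit[OF assms(2)] lin_form_def)
  then have "snd x mod p = snd y mod p"
    by (metis mod_minus_cong minus_minus)
  then have snd_eq: "snd x = snd y"
    using assms(3,4) by (rule_tac Fp_elems_eq_if_mod_eq) (auto simp: R_elems_def)
  have "p dvd l * (2 * fst x + snd x) - l * (2 * fst y + snd y)"
    using right by (simp add: gray_right_unit lin_form_def mod_eq_dvd_iff algebra_simps)
  then have "p dvd l * (l * (2 * fst x + snd x) - l * (2 * fst y + snd y))"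
    by (rule dvd_mult)
  moreover have "l * (l * t) = t" for t
    using assms(2) by (metis mult.assoc mult_1 power2_eq_square)
  ultimately have "p dvd 2 * (fst x - fst y)"
    using snd_eq by (simp add: right_diff_distrib algebra_simps)
  then have "p dvd fst x - fst y"
    using assms(1) by (metis coprime_dvd_mult_right_iff coprime_right_2_iff_odd)
  then have "fst x = fst y"
    using assms(3,4) by (rule_tac Fp_elems_eq_if_mod_eq) (auto simp: R_elems_def mod_eq_dvd_iff)
  with snd_eq show ?thesis
    by (simp add: prod_eq_iff)
qed

lemma inj_on_gray:
  assumes "odd p" "l\<^sup>2 = 1"
  shows "inj_on (gray p (unit_theta l)) {c. set c \<subseteq> R_elems p}"
proof
  fix c d
  assume c: "c \<in> {c. set c \<subseteq> R_elems p}" and d: "d \<in> {c. set c \<subseteq> R_elems p}"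
    and eq: "gray p (unit_theta l) c = gray p (unit_theta l) d"
  let ?coords = "\<lambda>x. (gray_left p (unit_theta l) x, gray_right p (unit_theta l) x)"
  have "length c = length d"
    using arg_cong[OF eq, of length] by (simp add: gray_eq_map_append)
  with eq have "map (gray_left p (unit_theta l)) c = map (gray_left p (unit_theta l)) d"
    and "map (gray_right p (unit_theta l)) c = map (gray_right p (unit_theta l)) d"
    by (simp_all add: gray_eq_map_append)
  moreover have "map ?coords xs
      = zip (map (gray_left p (unit_theta l)) xs) (map (gray_right p (unit_theta l)) xs)" for xs
    by (simp add: zip_map_map zip_same_conv_map)
  ultimately have "map ?coords c = map ?coords d"
    by simp
  moreover have "inj_on ?coords (R_elems p)"
    by (intro inj_onI gray_coords_inj[OF assms]) simp_all
  then have "inj_on ?coords (set c \<union> set d)"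
    by (rule inj_on_subset) (use c d in auto)
  ultimately show "c = d"
    by (simp add: inj_on_map_eq_map)
qed

lemma R_mult_in_R_elems: "p > 0 \<Longrightarrow> R_mult p a x \<in> R_elems p"
  by (simp add: R_mult_def R_elems_def Fp_elems_def)

lemma constacyclic_iff_cyclic_gray_image:
  assumes "p > 0" "odd p" "l\<^sup>2 = 1" "linear_code_R p n C"
  shows "constacyclic_R p (unit_theta l) C
    \<longleftrightarrow> cyclic_code_Fp p (2 * n) (gray p (unit_theta l) ` C)"
proof -
  let ?\<theta> = "unit_theta l"
  have C_R: "C \<subseteq> {c. set c \<subseteq> R_elems p}"
    using assms(4) by (auto simp: linear_code_R_def R_vecs_def)
  have shift_iff: "R_mult p ?\<theta> (last c) # butlast c \<in> C
      \<longleftrightarrow> last (gray p ?\<theta> c) # butlast (gray p ?\<theta> c) \<in> gray p ?\<theta> ` C"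
    if "c \<in> C" "c \<noteq> []" for c
  proof -
    have "R_mult p ?\<theta> (last c) # butlast c \<in> {c. set c \<subseteq> R_elems p}"
      using that C_R R_mult_in_R_elems[OF assms(1)] by (auto dest!: in_set_butlastD)
    then have "R_mult p ?\<theta> (last c) # butlast c \<in> C
        \<longleftrightarrow> gray p ?\<theta> (R_mult p ?\<theta> (last c) # butlast c) \<in> gray p ?\<theta> ` C"
      by (rule inj_on_image_mem_iff[OF inj_on_gray[OF assms(2,3)] _ C_R, symmetric])
    then show ?thesis
      by (simp only: gray_constashift[OF assms(3) that(2)])
  qed
  have nonempty_iff: "gray p ?\<theta> c \<noteq> [] \<longleftrightarrow> c \<noteq> []" for c
    by (simp add: gray_eq_map_append)
  show ?thesis
  proof
    assume const: "constacyclic_R p ?\<theta> C"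
    show "cyclic_code_Fp p (2 * n) (gray p ?\<theta> ` C)"
      unfolding cyclic_code_Fp_def
    proof (intro conjI ballI impI)
      show "linear_code_Fp p (2 * n) (gray p ?\<theta> ` C)"
        using linear_code_Fp_gray_image[OF assms(1,4)] .
      fix x assume "x \<in> gray p ?\<theta> ` C" "x \<noteq> []"
      then obtain c where "c \<in> C" "c \<noteq> []" "x = gray p ?\<theta> c"
        using nonempty_iff by blast
      then show "last x # butlast x \<in> gray p ?\<theta> ` C"
        using const shift_iff by (simp add: constacyclic_R_def)
    qed
  next
    assume "cyclic_code_Fp p (2 * n) (gray p ?\<theta> ` C)"
    then show "constacyclic_R p ?\<theta> C"
      unfolding constacyclic_R_def cyclic_code_Fp_def using shift_iff nonempty_iff by blast
  qed
qed

theorem theorem3p13: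
  fixes p :: int and n :: nat and \<theta> :: "int \<times> int"
    and C :: "(int \<times> int) list set"
  assumes "prime p" and "odd p"
    and "\<theta> = (1, (-2) mod p) \<or> \<theta> = ((-1) mod p, 2)"
    and "linear_code_R p n C"
  shows "constacyclic_R p \<theta> C \<longleftrightarrow> cyclic_code_Fp p (2 * n) (gray p \<theta> ` C)"
proof -
  have "p > 0"
    using assms(1) by (simp add: prime_gt_0_int)
  obtain l where l: "l\<^sup>2 = 1" and fst_mod: "fst \<theta> mod p = fst (unit_theta l) mod p"
    and snd_mod: "snd \<theta> mod p = snd (unit_theta l) mod p"
    using assms(3) by (elim disjE) (auto simp: unit_theta_def intro: that[of 1] that[of "-1"])
  show ?thesis
    unfolding constacyclic_R_theta_mod[OF fst_mod snd_mod] gray_theta_mod[OF fst_mod snd_mod]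
    by (rule constacyclic_iff_cyclic_gray_image[OF \<open>p > 0\<close> assms(2) l assms(4)])
qed

end
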